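(* Let $k\ge 1$ and let $(N,E)$ be a $(k+1)$-set-homogeneous $k$-hypergraph. If $U,V\subseteq N$ satisfy $|U|=|V|=k+1$ and $U$ and $V$ contain the same number of edges of $(N,E)$, then there is $g\in\mathrm{Aut}(N,E)$ with $U^g=V$.
   Context: A $k$-hypergraph is a pair $(N,E)$ with $N$ countable and $E$ a set of $k$-element subsets of $N$ (edges). A structure is $t$-set-homogeneous if whenever $U,V\subseteq N$ with $|U|=|V|=t$ carry isomorphic induced substructures, there is an automorphism $g$ with $U^g=V$. *)

theory Defs
  imports Main "HOL-Library.Countable_Set"
begin

definition hypergraph :: "nat \<Rightarrow> 'a set \<Rightarrow> 'a set set \<Rightarrow> bool" where
  "hypergraph k N E \<longleftrightarrow> countable N \<and> (\<forall>e\<in>E. e \<subseteq> N \<and> finite e \<and> card e = k)"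

definition automorphism :: "'a set \<Rightarrow> 'a set set \<Rightarrow> ('a \<Rightarrow> 'a) \<Rightarrow> bool" where
  "automorphism N E g \<longleftrightarrow> bij_betw g N N \<and> (\<forall>e. e \<subseteq> N \<longrightarrow> (e \<in> E \<longleftrightarrow> g ` e \<in> E))"

definition induced_iso :: "'a set set \<Rightarrow> 'a set \<Rightarrow> 'a set \<Rightarrow> bool" where
  "induced_iso E U V \<longleftrightarrow>
     (\<exists>f. bij_betw f U V \<and> (\<forall>e. e \<subseteq> U \<longrightarrow> (e \<in> E \<longleftrightarrow> f ` e \<in> E)))"

definition set_homogeneous :: "nat \<Rightarrow> 'a set \<Rightarrow> 'a set set \<Rightarrow> bool" where
  "set_homogeneous t N E \<longleftrightarrow>
     (\<forall>U V. U \<subseteq> N \<longrightarrow> V \<subseteq> N \<longrightarrow> finite U \<longrightarrow> finite V \<longrightarrow> card U = t \<longrightarrow> card V = t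
        \<longrightarrow> induced_iso E U V \<longrightarrow> (\<exists>g. automorphism N E g \<and> g ` U = V))"

definition edges_in :: "'a set set \<Rightarrow> 'a set \<Rightarrow> nat" where
  "edges_in E U = card {e \<in> E. e \<subseteq> U}"

end

theory Submission
  imports Defs
begin

text \<open>In a \<open>k\<close>-hypergraph the only \<open>k\<close>-subsets of a \<open>(k+1)\<close>-set \<open>U\<close> are the complements
  \<open>U - {x}\<close>, so the induced structure on \<open>U\<close> is determined by the set of points \<open>x\<close> for which
  \<open>U - {x}\<close> is an edge, whose size is the number of edges in \<open>U\<close>. Two such sets of equal size
  can be matched by a bijection \<open>U \<rightarrow> V\<close>, which is then an isomorphism of the induced
  substructures, and \<open>(k+1)\<close>-set-homogeneity extends it to an automorphism.\<close>

definition edge_points :: "'a set set \<Rightarrow> 'a set \<Rightarrow> 'a set" where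
  "edge_points E U = {x \<in> U. U - {x} \<in> E}"

lemma subset_card_plus_one_eq_Diff_singletonE:
  assumes "finite U" "e \<subseteq> U" "card e + 1 = card U"
  obtains x where "x \<in> U" "e = U - {x}"
proof -
  have "card (U - e) = 1"
    using assms by (simp add: card_Diff_subset finite_subset)
  then obtain x where "U - e = {x}" by (meson card_1_singletonE)
  with assms(2) show thesis by (intro that) auto
qed

lemma edges_in_eq_card_edge_points:
  assumes "hypergraph k N E" "finite U" "card U = k + 1"
  shows "edges_in E U = card (edge_points E U)"
proof -
  have "{e \<in> E. e \<subseteq> U} = (\<lambda>x. U - {x}) ` edge_points E U"
  proof (intro equalityI subsetI)
    fix e assume e: "e \<in> {e \<in> E. e \<subseteq> U}"
    then have "card e = k" using assms(1) by (auto simp: hypergraph_def)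
    with e assms(2,3) obtain x where "x \<in> U" "e = U - {x}"
      by (elim subset_card_plus_one_eq_Diff_singletonE) auto
    with e show "e \<in> (\<lambda>x. U - {x}) ` edge_points E U" by (auto simp: edge_points_def)
  qed (auto simp: edge_points_def)
  moreover have "inj_on (\<lambda>x. U - {x}) (edge_points E U)"
    by (auto simp: inj_on_def edge_points_def)
  ultimately show ?thesis by (simp add: edges_in_def card_image)
qed

lemma finite_same_card_bij_betw_mapping_subset:
  assumes "finite U" "finite V" "S \<subseteq> U" "T \<subseteq> V"
    and "card U = card V" "card S = card T"
  obtains f where "bij_betw f U V" "f ` S = T"
proof -
  have fin: "finite S" "finite T" "finite (U - S)" "finite (V - T)"
    using assms(1-4) finite_subset by auto
  have "card (U - S) = card (V - T)"
    using assms fin by (simp add: card_Diff_subset)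
  then obtain f2 where f2: "bij_betw f2 (U - S) (V - T)"
    using fin finite_same_card_bij by blast
  obtain f1 where f1: "bij_betw f1 S T"
    using fin assms(6) finite_same_card_bij by blast
  define f where "f x = (if x \<in> S then f1 x else f2 x)" for x
  have "bij_betw f S T"
    using f1 by (rule bij_betw_cong[THEN iffD1, rotated]) (simp add: f_def)
  moreover have "bij_betw f (U - S) (V - T)"
    using f2 by (rule bij_betw_cong[THEN iffD1, rotated]) (simp add: f_def)
  ultimately have "bij_betw f (S \<union> (U - S)) (T \<union> (V - T))"
    by (rule bij_betw_combine) auto
  with assms(3,4) have "bij_betw f U V" by (simp add: Un_absorb1)
  with \<open>bij_betw f S T\<close> show thesis by (intro that) (auto simp: bij_betw_def)
qed

lemma induced_iso_if_bij_betw_edge_points: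
  assumes hg: "hypergraph k N E" and "finite U" "card U = k + 1"
    and f: "bij_betw f U V" "f ` edge_points E U = edge_points E V"
  shows "induced_iso E U V"
  unfolding induced_iso_def
proof (intro exI conjI allI impI)
  show "bij_betw f U V" by fact
  fix e assume eU: "e \<subseteq> U"
  have inj: "inj_on f U" using f(1) by (rule bij_betw_imp_inj_on)
  then have card_fe: "card (f ` e) = card e"
    using eU by (meson card_image inj_on_subset)
  show "e \<in> E \<longleftrightarrow> f ` e \<in> E"
  proof (cases "card e = k")
    case False
    with card_fe hg show ?thesis by (auto simp: hypergraph_def)
  next
    case True
    with eU assms(2,3) obtain x where x: "x \<in> U" "e = U - {x}"
      by (elim subset_card_plus_one_eq_Diff_singletonE) auto
    have fx: "f x \<in> V" "f ` e = V - {f x}"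
      using x f(1) inj by (auto simp: inj_on_image_set_diff bij_betw_def)
    have "e \<in> E \<longleftrightarrow> x \<in> edge_points E U" using x by (auto simp: edge_points_def)
    also have "\<dots> \<longleftrightarrow> f x \<in> edge_points E V"
      using f x inj edge_points_def by (metis (no_types, lifting) inj_on_image_mem_iff mem_Collect_eq subsetI)
    also have "\<dots> \<longleftrightarrow> f ` e \<in> E" using fx by (auto simp: edge_points_def)
    finally show ?thesis .
  qed
qed

theorem lemma3p3:
  fixes k :: nat and N :: "'a set" and E :: "'a set set" and U V :: "'a set"
  assumes "k \<ge> 1"
    and "hypergraph k N E"
    and "set_homogeneous (k + 1) N E"
    and "U \<subseteq> N" and "V \<subseteq> N" and "finite U" and "finite V"
    and "card U = k + 1" and "card V = k + 1"
    and "edges_in E U = edges_in E V"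
  shows "\<exists>g. automorphism N E g \<and> g ` U = V"
proof -
  have "card (edge_points E U) = card (edge_points E V)"
    using assms(2,6-10) by (simp add: edges_in_eq_card_edge_points)
  moreover have "edge_points E U \<subseteq> U" "edge_points E V \<subseteq> V"
    by (auto simp: edge_points_def)
  ultimately obtain f where "bij_betw f U V" "f ` edge_points E U = edge_points E V"
    using assms(6-9) finite_same_card_bij_betw_mapping_subset by metis
  with assms(2,6,8) have "induced_iso E U V"
    by (rule induced_iso_if_bij_betw_edge_points)
  with assms(3-9) show ?thesis by (auto simp: set_homogeneous_def)
qed

end
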